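(* Let the binary predicate symbols be $\mathcal F=\{f,g,h\}$ (with arbitrary unary symbols), and for a variable $x$ define $P_f(x):=\exists^{=1}y.f(x,y)\wedge\exists^{=0}y.(g(x,y)\vee h(x,y))$, $P_g(x):=\exists^{=1}y.g(x,y)\wedge\exists^{=0}y.(f(x,y)\vee h(x,y))$, and $P_{fg}(x):=\exists^{=1}y.f(x,y)\wedge\exists^{=1}y.g(x,y)\wedge\exists^{=0}y.h(x,y)$. Then (a) $P_{fg}\sim P_f*P_g$, and (b) $P_{fg}$ is not equivalent to any boolean combination of $P_f$ and $P_g$.
   Context: Environments: finite nonempty domain $D$, interpretations of unary predicates as subsets of $D$ and of $f,g,h$ as subsets of $D\times D$, and an assignment of elements to variables. $\exists^{=k}y.G$ means exactly $k$ elements $y$ satisfy $G$. $[\![G_1*G_2]\!]e$ holds iff there are environments $e_1,e_2$ with the same domain and variable assignment such that each predicate symbol's interpretation in $e$ is the disjoint union of its interpretations in $e_1,e_2$, and $G_1$ holds in $e_1$, $G_2$ in $e_2$. $G\sim H$ means equal truth values in all environments. *)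

theory Defs
  imports Main
begin

datatype binsym = Fs | Gs | Hs

record ('a, 'u, 'v) env =
  dom :: "'a set"
  un  :: "'u \<Rightarrow> 'a set"
  bin :: "binsym \<Rightarrow> ('a \<times> 'a) set"
  asg :: "'v \<Rightarrow> 'a"

definition wf_env :: "('a, 'u, 'v) env \<Rightarrow> bool" where
  "wf_env e \<longleftrightarrow> finite (dom e) \<and> dom e \<noteq> {} \<and>
     (\<forall>u. un e u \<subseteq> dom e) \<and> (\<forall>s. bin e s \<subseteq> dom e \<times> dom e) \<and>
     (\<forall>v. asg e v \<in> dom e)"

text \<open>Formulas are identified with their semantics: predicates on environments.\<close>
type_synonym ('a, 'u, 'v) form = "('a, 'u, 'v) env \<Rightarrow> bool"

definition ex_eq :: "nat \<Rightarrow> 'v \<Rightarrow> ('a, 'u, 'v) form \<Rightarrow> ('a, 'u, 'v) form" where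
  "ex_eq k y G e \<longleftrightarrow> card {d \<in> dom e. G (e\<lparr>asg := (asg e)(y := d)\<rparr>)} = k"

definition atom :: "binsym \<Rightarrow> 'v \<Rightarrow> 'v \<Rightarrow> ('a, 'u, 'v) form" where
  "atom s x y e \<longleftrightarrow> (asg e x, asg e y) \<in> bin e s"

definition star :: "('a, 'u, 'v) form \<Rightarrow> ('a, 'u, 'v) form \<Rightarrow> ('a, 'u, 'v) form" where
  "star G1 G2 e \<longleftrightarrow> (\<exists>e1 e2. wf_env e1 \<and> wf_env e2 \<and>
     dom e1 = dom e \<and> dom e2 = dom e \<and> asg e1 = asg e \<and> asg e2 = asg e \<and>
     (\<forall>u. un e u = un e1 u \<union> un e2 u \<and> un e1 u \<inter> un e2 u = {}) \<and>
     (\<forall>s. bin e s = bin e1 s \<union> bin e2 s \<and> bin e1 s \<inter> bin e2 s = {}) \<and>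
     G1 e1 \<and> G2 e2)"

definition fequiv :: "('a, 'u, 'v) form \<Rightarrow> ('a, 'u, 'v) form \<Rightarrow> bool" where
  "fequiv G H \<longleftrightarrow> (\<forall>e. wf_env e \<longrightarrow> (G e \<longleftrightarrow> H e))"

text \<open>The bound variable y is taken distinct from x.\<close>
definition P_f :: "'v \<Rightarrow> 'v \<Rightarrow> ('a, 'u, 'v) form" where
  "P_f x y e \<longleftrightarrow> ex_eq 1 y (atom Fs x y) e \<and>
                  ex_eq 0 y (\<lambda>e'. atom Gs x y e' \<or> atom Hs x y e') e"

definition P_g :: "'v \<Rightarrow> 'v \<Rightarrow> ('a, 'u, 'v) form" where
  "P_g x y e \<longleftrightarrow> ex_eq 1 y (atom Gs x y) e \<and>
                  ex_eq 0 y (\<lambda>e'. atom Fs x y e' \<or> atom Hs x y e') e"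

definition P_fg :: "'v \<Rightarrow> 'v \<Rightarrow> ('a, 'u, 'v) form" where
  "P_fg x y e \<longleftrightarrow> ex_eq 1 y (atom Fs x y) e \<and> ex_eq 1 y (atom Gs x y) e \<and>
                   ex_eq 0 y (atom Hs x y) e"

end

theory Submission
  imports Defs
begin

text \<open>All three formulas only speak about the sets of f-, g- and h-successors of x. An environment
  satisfying \<open>P_fg\<close> splits into one keeping everything except the g-edges leaving x, which
  satisfies \<open>P_f\<close>, and one consisting of exactly those g-edges, which satisfies \<open>P_g\<close>; conversely
  the successor sets of a disjoint union are the unions of the successor sets. For (b), a single point
  without edges and a single point with an f- and a g-loop both falsify \<open>P_f\<close> and \<open>P_g\<close>, but only the
  second satisfies \<open>P_fg\<close>.\<close>

definition successors :: "('a, 'u, 'v) env \<Rightarrow> binsym \<Rightarrow> 'v \<Rightarrow> 'a set" where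
  "successors e s x = {d \<in> dom e. (asg e x, d) \<in> bin e s}"

lemma finite_successors: "wf_env e \<Longrightarrow> finite (successors e s x)"
  unfolding wf_env_def successors_def by auto

lemma ex_eq_atom_iff:
  assumes "x \<noteq> y"
  shows "ex_eq k y (atom s x y) e \<longleftrightarrow> card (successors e s x) = k"
  using assms unfolding ex_eq_def atom_def successors_def by simp

lemma ex_eq_atom_disj_iff:
  assumes "x \<noteq> y"
  shows "ex_eq k y (\<lambda>e'. atom s x y e' \<or> atom t x y e') e
           \<longleftrightarrow> card (successors e s x \<union> successors e t x) = k"
proof -
  have "{d \<in> dom e. atom s x y (e\<lparr>asg := (asg e)(y := d)\<rparr>) \<or> atom t x y (e\<lparr>asg := (asg e)(y := d)\<rparr>)}
        = successors e s x \<union> successors e t x"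
    using assms unfolding atom_def successors_def by auto
  then show ?thesis unfolding ex_eq_def by simp
qed

lemma P_f_iff:
  "x \<noteq> y \<Longrightarrow> wf_env e \<Longrightarrow> P_f x y e \<longleftrightarrow>
     card (successors e Fs x) = 1 \<and> successors e Gs x = {} \<and> successors e Hs x = {}"
  unfolding P_f_def ex_eq_atom_iff ex_eq_atom_disj_iff
  using finite_successors[of e] by simp

lemma P_g_iff:
  "x \<noteq> y \<Longrightarrow> wf_env e \<Longrightarrow> P_g x y e \<longleftrightarrow>
     card (successors e Gs x) = 1 \<and> successors e Fs x = {} \<and> successors e Hs x = {}"
  unfolding P_g_def ex_eq_atom_iff ex_eq_atom_disj_iff
  using finite_successors[of e] by simp

lemma P_fg_iff:
  "x \<noteq> y \<Longrightarrow> wf_env e \<Longrightarrow> P_fg x y e \<longleftrightarrow>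
     card (successors e Fs x) = 1 \<and> card (successors e Gs x) = 1 \<and> successors e Hs x = {}"
  unfolding P_fg_def ex_eq_atom_iff using finite_successors[of e] by simp

lemma successors_star_split:
  assumes "dom e1 = dom e" "dom e2 = dom e" "asg e1 = asg e" "asg e2 = asg e"
    and "bin e s = bin e1 s \<union> bin e2 s"
  shows "successors e s x = successors e1 s x \<union> successors e2 s x"
  using assms unfolding successors_def by auto

lemma star_by_splitting_edges:
  assumes "wf_env e" and "\<And>s. B s \<subseteq> bin e s"
    and "e1 = e\<lparr>bin := \<lambda>s. bin e s - B s\<rparr>" and "e2 = e\<lparr>un := \<lambda>_. {}, bin := B\<rparr>"
    and "G e1" and "H e2"
  shows "star G H e"
  unfolding star_def
proof (intro exI conjI allI)
  have "B s \<subseteq> dom e \<times> dom e" for s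
    using assms(1,2) unfolding wf_env_def by blast
  then show "wf_env e1" "wf_env e2"
    using assms(1) unfolding assms(3,4) wf_env_def by auto
  show "bin e s = bin e1 s \<union> bin e2 s" for s
    using assms(2)[of s] unfolding assms(3,4) by auto
qed (use assms(5,6) in \<open>auto simp: assms(3,4)\<close>)

lemma star_P_f_P_g_imp_P_fg:
  fixes e :: "('a, 'u, 'v) env"
  assumes "x \<noteq> y" "wf_env e" "star (P_f x y) (P_g x y) e"
  shows "P_fg x y e"
proof -
  obtain e1 e2 :: "('a, 'u, 'v) env" where wf: "wf_env e1" "wf_env e2"
    and env_eqs: "dom e1 = dom e" "dom e2 = dom e" "asg e1 = asg e" "asg e2 = asg e"
    and bin_eq: "\<forall>s. bin e s = bin e1 s \<union> bin e2 s \<and> bin e1 s \<inter> bin e2 s = {}"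
    and "P_f x y e1" "P_g x y e2"
    using assms(3) unfolding star_def by blast
  moreover have "successors e s x = successors e1 s x \<union> successors e2 s x" for s
    using env_eqs bin_eq by (intro successors_star_split) auto
  ultimately show ?thesis
    using P_fg_iff[OF assms(1,2)] P_f_iff[OF assms(1) wf(1)] P_g_iff[OF assms(1) wf(2)] by simp
qed

lemma P_fg_imp_star_P_f_P_g:
  assumes "x \<noteq> y" "wf_env e" "P_fg x y e"
  shows "star (P_f x y) (P_g x y) e"
proof -
  define B where "B s = (if s = Gs then {p \<in> bin e Gs. fst p = asg e x} else {})" for s
  define e1 where "e1 = e\<lparr>bin := \<lambda>s. bin e s - B s\<rparr>"
  define e2 where "e2 = e\<lparr>un := \<lambda>_. {}, bin := B\<rparr>"
  have wf: "wf_env e1" "wf_env e2"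
    using assms(2) unfolding e1_def e2_def B_def wf_env_def by auto
  have "successors e1 s x = (if s = Gs then {} else successors e s x)"
    and "successors e2 s x = (if s = Gs then successors e Gs x else {})" for s
    unfolding e1_def e2_def successors_def B_def by auto
  then have P_f_e1: "P_f x y e1" and P_g_e2: "P_g x y e2"
    using assms(3) P_fg_iff[OF assms(1,2)] P_f_iff[OF assms(1) wf(1)] P_g_iff[OF assms(1) wf(2)]
    by simp_all
  have B_edges: "B s \<subseteq> bin e s" for s
    unfolding B_def by auto
  show ?thesis
    using assms(2) B_edges e1_def e2_def P_f_e1 P_g_e2 by (rule star_by_splitting_edges)
qed

lemma not_fequiv_boolean_combination:
  fixes G H1 H2 :: "('a, 'u, 'v) form"
  assumes "wf_env e0" "wf_env e1" "H1 e0 = H1 e1" "H2 e0 = H2 e1" "G e0 \<noteq> G e1"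
  shows "\<not> (\<exists>b. fequiv G (\<lambda>e. b (H1 e) (H2 e)))"
proof
  assume "\<exists>b. fequiv G (\<lambda>e. b (H1 e) (H2 e))"
  then obtain b where "G e0 = b (H1 e0) (H2 e0)" and "G e1 = b (H1 e1) (H2 e1)"
    using assms(1,2) unfolding fequiv_def by blast
  with assms(3-5) show False by simp
qed

definition loop_env :: "'a \<Rightarrow> binsym set \<Rightarrow> ('a, 'u, 'v) env" where
  "loop_env a S = \<lparr>dom = {a}, un = \<lambda>_. {}, bin = \<lambda>s. if s \<in> S then {(a, a)} else {}, asg = \<lambda>_. a\<rparr>"

lemma wf_loop_env: "wf_env (loop_env a S)"
  unfolding loop_env_def wf_env_def by auto

lemma successors_loop_env: "successors (loop_env a S) s x = (if s \<in> S then {a} else {})"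
  unfolding loop_env_def successors_def by auto

theorem mainTheorem13:
  fixes x y :: 'v
  assumes "x \<noteq> y"
  shows "fequiv (P_fg x y :: ('a, 'u, 'v) form) (star (P_f x y) (P_g x y))
       \<and> \<not> (\<exists>b :: bool \<Rightarrow> bool \<Rightarrow> bool.
              fequiv (P_fg x y :: ('a, 'u, 'v) form) (\<lambda>e. b (P_f x y e) (P_g x y e)))"
proof
  show "fequiv (P_fg x y :: ('a, 'u, 'v) form) (star (P_f x y) (P_g x y))"
    unfolding fequiv_def
    using P_fg_imp_star_P_f_P_g[OF assms] star_P_f_P_g_imp_P_fg[OF assms] by blast
  fix a :: 'a
  let ?e0 = "loop_env a {} :: ('a, 'u, 'v) env"
  let ?e1 = "loop_env a {Fs, Gs} :: ('a, 'u, 'v) env"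
  show "\<not> (\<exists>b :: bool \<Rightarrow> bool \<Rightarrow> bool.
              fequiv (P_fg x y :: ('a, 'u, 'v) form) (\<lambda>e. b (P_f x y e) (P_g x y e)))"
  proof (rule not_fequiv_boolean_combination[of ?e0 ?e1])
    show "P_f x y ?e0 = P_f x y ?e1" "P_g x y ?e0 = P_g x y ?e1" "P_fg x y ?e0 \<noteq> P_fg x y ?e1"
      by (simp_all add: P_f_iff P_g_iff P_fg_iff assms wf_loop_env successors_loop_env)
  qed (rule wf_loop_env)+
qed

end
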